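(* Let $\mathcal{A}$ be a $\tau^*_{\mathrm{tup}}$-structure which is a model of $T_{\mathrm{tup}}$ and whose $M$-sort (as a $\tau$-structure) is $\mathcal{M}$. Then there is a unique embedding $e$ of the $\tau_{\mathrm{tup}}$-structure $\mathcal{M}^{<\mathbb{N}}$ into (the $\tau_{\mathrm{tup}}$-reduct of) $\mathcal{A}$ which is the identity on the sort $M$; moreover $e$ is an embedding of $(\mathcal{M}^{<\mathbb{N}},R',g')$ into $\mathcal{A}$, where $R'=\{n\in\mathbb{N}: e(n)\in R^{\mathcal{A}}\}$ and $g'(n,\pi)=g^{\mathcal{A}}(e(n),e(\pi))$. Furthermore, identifying $\mathcal{M}^{<\mathbb{N}}$ with its image under $e$: the $N$-sort of $\mathcal{A}$ is an end extension of $\mathbb{N}$, and every element $\pi$ of the $M_{\mathrm{tup}}$-sort of $\mathcal{A}$ with $|\pi|\in\mathbb{N}$ belongs to $M^{<\mathbb{N}}$.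
   Context: Fix a countable language $\tau$. $\tau_{\mathrm{tup}}$ is the three-sorted language with sorts $M$ (carrying the symbols of $\tau$), $N$ (carrying the language of arithmetic $0,1,+,\cdot,<$), and $M_{\mathrm{tup}}$, together with a function $|\cdot|:M_{\mathrm{tup}}\to N$ and a relation $\mathrm{ind}\subseteq M_{\mathrm{tup}}\times N\times M$ ("the $i$-th entry of $\pi$ is $m$"). $\tau^*_{\mathrm{tup}}=\tau_{\mathrm{tup}}\cup\{R,g\}$ with $R$ a unary relation on $N$ and $g:N\times M_{\mathrm{tup}}\to M$ a binary function. $T_{\mathrm{tup}}$ is the theory stating: the $N$-sort satisfies $PA^-$ (Peano arithmetic without induction, i.e. the finitely axiomatized theory of non-negative parts of discretely ordered rings); (a) $\mathrm{ind}(\pi,i,m)\to i<|\pi|$; (b) $\mathrm{ind}(\pi,i,m)\wedge\mathrm{ind}(\pi,i,m')\to m=m'$; (c) $i<|\pi|\to\exists m\,\mathrm{ind}(\pi,i,m)$; (d) if $|\pi|=|\rho|$ and for all $i<|\pi|$ there is $m$ with $\mathrm{ind}(\pi,i,m)\wedge\mathrm{ind}(\rho,i,m)$, then $\pi=\rho$; (e) some $\pi$ has $|\pi|=0$; (f) for all $\pi,m$ there is $\rho$ with $|\rho|=|\pi|+1$, $\mathrm{ind}(\rho,|\pi|,m)$ and $\mathrm{ind}(\pi,i,m')\leftrightarrow\mathrm{ind}(\rho,i,m')$ for all $i<|\pi|$, $m'$; (g) for all $\pi$ with $|\pi|\ge1$ there is $\rho$ with $|\rho|=|\pi|-1$ and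 $\mathrm{ind}(\pi,i,m)\leftrightarrow\mathrm{ind}(\rho,i,m)$ for all $i<|\rho|$, $m$. For a $\tau$-structure $\mathcal{M}$ with domain $M$, $\mathcal{M}^{<\mathbb{N}}=(\mathcal{M},\mathbb{N},M^{<\mathbb{N}})$ is the $\tau_{\mathrm{tup}}$-structure with the standard natural numbers and all finite tuples from $M$, with the natural length and indexing. *)

theory Defs
  imports "HOL-Library.Countable"
begin

text \<open>A tau_tup-structure has sorts 'm (M), 'n (N), 't (M_tup).\<close>

record ('r,'f,'m,'n,'t) tup_str =
  trel  :: "'r \<Rightarrow> 'm list \<Rightarrow> bool"
  tfun  :: "'f \<Rightarrow> 'm list \<Rightarrow> 'm"
  nzero :: "'n"
  none  :: "'n"
  nplus :: "'n \<Rightarrow> 'n \<Rightarrow> 'n"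
  ntimes :: "'n \<Rightarrow> 'n \<Rightarrow> 'n"
  nless :: "'n \<Rightarrow> 'n \<Rightarrow> bool"
  len   :: "'t \<Rightarrow> 'n"
  ind   :: "'t \<Rightarrow> 'n \<Rightarrow> 'm \<Rightarrow> bool"

record ('r,'f,'m,'n,'t) tup_star = "('r,'f,'m,'n,'t) tup_str" +
  Rel :: "'n \<Rightarrow> bool"
  gfun :: "'n \<Rightarrow> 't \<Rightarrow> 'm"

text \<open>PA minus (Kaye's axioms) on the N-sort.\<close>
definition PA_minus :: "('r,'f,'m,'n,'t,'z) tup_str_scheme \<Rightarrow> bool" where
  "PA_minus A \<longleftrightarrow>
    (let z = nzero A; u = none A; p = nplus A; t = ntimes A; l = nless A in
     (\<forall>x y w. p (p x y) w = p x (p y w)) \<and>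
     (\<forall>x y. p x y = p y x) \<and>
     (\<forall>x y w. t (t x y) w = t x (t y w)) \<and>
     (\<forall>x y. t x y = t y x) \<and>
     (\<forall>x y w. t x (p y w) = p (t x y) (t x w)) \<and>
     (\<forall>x. p x z = x \<and> t x z = z) \<and>
     (\<forall>x. t x u = x) \<and>
     (\<forall>x y w. l x y \<and> l y w \<longrightarrow> l x w) \<and>
     (\<forall>x. \<not> l x x) \<and>
     (\<forall>x y. l x y \<or> x = y \<or> l y x) \<and>
     (\<forall>x y w. l x y \<longrightarrow> l (p x w) (p y w)) \<and>
     (\<forall>x y w. l z w \<and> l x y \<longrightarrow> l (t x w) (t y w)) \<and>
     (\<forall>x y. l x y \<longrightarrow> (\<exists>w. p x w = y)) \<and>
     (l z u \<and> (\<forall>x. l z x \<longrightarrow> (l u x \<or> u = x))) \<and>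
     (\<forall>x. l z x \<or> z = x))"

definition T_tup :: "('r,'f,'m,'n,'t,'z) tup_str_scheme \<Rightarrow> bool" where
  "T_tup A \<longleftrightarrow> PA_minus A \<and>
    (\<forall>\<pi> i m. ind A \<pi> i m \<longrightarrow> nless A i (len A \<pi>)) \<and>
    (\<forall>\<pi> i m m'. ind A \<pi> i m \<and> ind A \<pi> i m' \<longrightarrow> m = m') \<and>
    (\<forall>\<pi> i. nless A i (len A \<pi>) \<longrightarrow> (\<exists>m. ind A \<pi> i m)) \<and>
    (\<forall>\<pi> \<rho>. len A \<pi> = len A \<rho> \<and>
        (\<forall>i. nless A i (len A \<pi>) \<longrightarrow> (\<exists>m. ind A \<pi> i m \<and> ind A \<rho> i m)) \<longrightarrow> \<pi> = \<rho>) \<and>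
    (\<exists>\<pi>. len A \<pi> = nzero A) \<and>
    (\<forall>\<pi> m. \<exists>\<rho>. len A \<rho> = nplus A (len A \<pi>) (none A) \<and> ind A \<rho> (len A \<pi>) m \<and>
        (\<forall>i m'. nless A i (len A \<pi>) \<longrightarrow> (ind A \<pi> i m' \<longleftrightarrow> ind A \<rho> i m'))) \<and>
    (\<forall>\<pi>. (nless A (none A) (len A \<pi>) \<or> none A = len A \<pi>) \<longrightarrow>
        (\<exists>\<rho>. nplus A (len A \<rho>) (none A) = len A \<pi> \<and>
           (\<forall>i m. nless A i (len A \<rho>) \<longrightarrow> (ind A \<pi> i m \<longleftrightarrow> ind A \<rho> i m))))"

definition std_tup :: "('r \<Rightarrow> 'm list \<Rightarrow> bool) \<Rightarrow> ('f \<Rightarrow> 'm list \<Rightarrow> 'm)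
    \<Rightarrow> ('r,'f,'m,nat,'m list) tup_str" where
  "std_tup Rm Fm = \<lparr> trel = Rm, tfun = Fm, nzero = 0, none = 1, nplus = (+), ntimes = (*),
     nless = (<), len = length, ind = (\<lambda>xs i m. i < length xs \<and> xs ! i = m) \<rparr>"

definition std_star :: "('r \<Rightarrow> 'm list \<Rightarrow> bool) \<Rightarrow> ('f \<Rightarrow> 'm list \<Rightarrow> 'm)
    \<Rightarrow> (nat \<Rightarrow> bool) \<Rightarrow> (nat \<Rightarrow> 'm list \<Rightarrow> 'm) \<Rightarrow> ('r,'f,'m,nat,'m list) tup_star" where
  "std_star Rm Fm R g = \<lparr> trel = Rm, tfun = Fm, nzero = 0, none = 1, nplus = (+), ntimes = (*),
     nless = (<), len = length, ind = (\<lambda>xs i m. i < length xs \<and> xs ! i = m), Rel = R, gfun = g \<rparr>"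

text \<open>An embedding of tau_tup-structures which is the identity on the M-sort, given by its
components eN on the N-sort and eT on the M_tup-sort (only the tau_tup symbols are used).\<close>
definition tup_emb :: "('r,'f,'m,'n1,'t1,'x) tup_str_scheme \<Rightarrow> ('r,'f,'m,'n2,'t2,'y) tup_str_scheme
    \<Rightarrow> ('n1 \<Rightarrow> 'n2) \<Rightarrow> ('t1 \<Rightarrow> 't2) \<Rightarrow> bool" where
  "tup_emb S A eN eT \<longleftrightarrow> inj eN \<and> inj eT \<and>
     (\<forall>r xs. trel S r xs \<longleftrightarrow> trel A r xs) \<and>
     (\<forall>f xs. tfun S f xs = tfun A f xs) \<and>
     eN (nzero S) = nzero A \<and> eN (none S) = none A \<and>
     (\<forall>a b. eN (nplus S a b) = nplus A (eN a) (eN b)) \<and>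
     (\<forall>a b. eN (ntimes S a b) = ntimes A (eN a) (eN b)) \<and>
     (\<forall>a b. nless S a b \<longleftrightarrow> nless A (eN a) (eN b)) \<and>
     (\<forall>\<pi>. eN (len S \<pi>) = len A (eT \<pi>)) \<and>
     (\<forall>\<pi> i m. ind S \<pi> i m \<longleftrightarrow> ind A (eT \<pi>) (eN i) m)"

definition star_emb :: "('r,'f,'m,'n1,'t1,'x) tup_star_scheme \<Rightarrow> ('r,'f,'m,'n2,'t2,'y) tup_star_scheme
    \<Rightarrow> ('n1 \<Rightarrow> 'n2) \<Rightarrow> ('t1 \<Rightarrow> 't2) \<Rightarrow> bool" where
  "star_emb S A eN eT \<longleftrightarrow> tup_emb S A eN eT \<and>
     (\<forall>n. Rel S n \<longleftrightarrow> Rel A (eN n)) \<and>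
     (\<forall>n \<pi>. gfun S n \<pi> = gfun A (eN n) (eT \<pi>))"

end

theory Submission
  imports Defs
begin

text \<open>
The embedding is forced: the N-sort must send k to the k-th successor of 0, and a finite tuple
xs must go to the element of length |xs| whose i-th entry is xs ! i for each i < |xs|.
Axioms (e) and (f) build such an element by appending one entry at a time, and extensionality (d)
makes it unique once we know that below a standard number there are only standard numbers. That
last fact is discreteness of PA-minus: x < y + 1 implies x \<le> y, so by induction nothing
nonstandard lies below a standard number. The same observation shows that a tuple of standard
length is determined by its finitely many entries and hence is standard.
\<close>

locale pa_minus =
  fixes A :: "('r,'f,'m,'n,'t,'z) tup_str_scheme"
  assumes PA_minus: "PA_minus A"
begin

abbreviation zeroA ("\<zero>") where "\<zero> \<equiv> nzero A"
abbreviation oneA ("\<one>") where "\<one> \<equiv> none A"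
abbreviation plusA (infixl "\<oplus>" 65) where "x \<oplus> y \<equiv> nplus A x y"
abbreviation timesA (infixl "\<otimes>" 70) where "x \<otimes> y \<equiv> ntimes A x y"
abbreviation lessA (infix "\<prec>" 50) where "x \<prec> y \<equiv> nless A x y"

lemma
  shows add_assoc: "x \<oplus> y \<oplus> z = x \<oplus> (y \<oplus> z)"
    and add_commute: "x \<oplus> y = y \<oplus> x"
    and distrib: "x \<otimes> (y \<oplus> z) = x \<otimes> y \<oplus> x \<otimes> z"
    and add_0: "x \<oplus> \<zero> = x"
    and mult_0: "x \<otimes> \<zero> = \<zero>"
    and mult_1: "x \<otimes> \<one> = x"
    and less_trans: "x \<prec> y \<Longrightarrow> y \<prec> z \<Longrightarrow> x \<prec> z"
    and less_irrefl: "\<not> x \<prec> x"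
    and less_linear: "x \<prec> y \<or> x = y \<or> y \<prec> x"
    and add_strict_right_mono: "x \<prec> y \<Longrightarrow> x \<oplus> z \<prec> y \<oplus> z"
    and less_imp_add: "x \<prec> y \<Longrightarrow> \<exists>w. x \<oplus> w = y"
    and zero_less_one: "\<zero> \<prec> \<one>"
    and one_le_pos: "\<zero> \<prec> x \<Longrightarrow> \<one> \<prec> x \<or> \<one> = x"
    and zero_le: "\<zero> \<prec> x \<or> \<zero> = x"
  using PA_minus unfolding PA_minus_def Let_def by meson+

lemma add_0_left: "\<zero> \<oplus> x = x"
  using add_0 add_commute by metis

lemma not_less_zero: "\<not> x \<prec> \<zero>"
  using zero_le less_trans less_irrefl by metis

lemma less_add_one: "x \<prec> x \<oplus> \<one>"
  using add_strict_right_mono[OF zero_less_one, of x] add_0_left add_commute by metis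

lemma less_imp_add_one_le:
  assumes "y \<prec> x"
  shows "y \<oplus> \<one> \<prec> x \<or> y \<oplus> \<one> = x"
proof -
  obtain w where x: "x = y \<oplus> w"
    using less_imp_add[OF assms] by metis
  have "w \<noteq> \<zero>"
    using assms less_irrefl by (auto simp: x add_0)
  then have "\<one> \<prec> w \<or> \<one> = w"
    using one_le_pos zero_le by metis
  then show ?thesis
    using add_strict_right_mono[of \<one> w y] by (auto simp: x add_commute)
qed

lemma less_add_one_imp_le:
  assumes "x \<prec> y \<oplus> \<one>"
  shows "x \<prec> y \<or> x = y"
proof (rule ccontr)
  assume "\<not> (x \<prec> y \<or> x = y)"
  then have "y \<oplus> \<one> \<prec> x \<or> y \<oplus> \<one> = x"
    using less_linear less_imp_add_one_le by blast
  then show False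
    using assms less_trans less_irrefl by blast
qed

end

primrec of_nat_N :: "('r,'f,'m,'n,'t,'z) tup_str_scheme \<Rightarrow> nat \<Rightarrow> 'n" where
  "of_nat_N A 0 = nzero A"
| "of_nat_N A (Suc k) = nplus A (of_nat_N A k) (none A)"

context pa_minus
begin

lemma of_nat_N_add: "of_nat_N A (a + b) = of_nat_N A a \<oplus> of_nat_N A b"
  by (induction b) (simp_all add: add_0 add_assoc)

lemma of_nat_N_mult: "of_nat_N A (a * b) = of_nat_N A a \<otimes> of_nat_N A b"
  by (induction b) (simp_all add: mult_0 of_nat_N_add distrib mult_1 add_commute)

lemma of_nat_N_strict_mono: "a < b \<Longrightarrow> of_nat_N A a \<prec> of_nat_N A b"
  by (induction rule: less_Suc_induct) (auto simp: less_add_one intro: less_trans)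

lemma of_nat_N_less_iff: "of_nat_N A a \<prec> of_nat_N A b \<longleftrightarrow> a < b"
proof
  assume less: "of_nat_N A a \<prec> of_nat_N A b"
  show "a < b"
  proof (rule ccontr)
    assume "\<not> a < b"
    then have "b < a \<or> b = a" by auto
    then show False
      using less of_nat_N_strict_mono less_trans less_irrefl by blast
  qed
qed (rule of_nat_N_strict_mono)

lemma inj_of_nat_N: "inj (of_nat_N A)"
proof (rule injI)
  fix a b
  assume "of_nat_N A a = of_nat_N A b"
  then show "a = b"
    using of_nat_N_less_iff[of a b] of_nat_N_less_iff[of b a] less_irrefl by auto
qed

lemma less_of_nat_N_imp_standard: "a \<prec> of_nat_N A k \<Longrightarrow> a \<in> range (of_nat_N A)"
proof (induction k)
  case 0
  then show ?case
    using not_less_zero by simp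
next
  case (Suc k)
  then have "a \<prec> of_nat_N A k \<or> a = of_nat_N A k"
    using less_add_one_imp_le by simp
  with Suc.IH show ?case by blast
qed

end

locale tup_model =
  fixes A :: "('r,'f,'m,'n,'t,'z) tup_str_scheme"
  assumes T_tup: "T_tup A"

sublocale tup_model \<subseteq> pa_minus
  using T_tup by unfold_locales (simp add: T_tup_def)

context tup_model
begin

lemma
  shows ind_less_len: "ind A \<pi> i m \<Longrightarrow> i \<prec> len A \<pi>"
    and ind_unique: "ind A \<pi> i m \<Longrightarrow> ind A \<pi> i m' \<Longrightarrow> m = m'"
    and ind_exists: "i \<prec> len A \<pi> \<Longrightarrow> \<exists>m. ind A \<pi> i m"
    and tup_ext: "len A \<pi> = len A \<rho> \<Longrightarrow>
      (\<And>i. i \<prec> len A \<pi> \<Longrightarrow> \<exists>m. ind A \<pi> i m \<and> ind A \<rho> i m) \<Longrightarrow> \<pi> = \<rho>"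
    and empty_tup: "\<exists>\<pi>. len A \<pi> = \<zero>"
    and snoc_tup: "\<exists>\<rho>. len A \<rho> = len A \<pi> \<oplus> \<one> \<and> ind A \<rho> (len A \<pi>) m \<and>
      (\<forall>i m'. i \<prec> len A \<pi> \<longrightarrow> (ind A \<pi> i m' \<longleftrightarrow> ind A \<rho> i m'))"
  using T_tup unfolding T_tup_def by meson+

definition represents :: "'m list \<Rightarrow> 't \<Rightarrow> bool" where
  "represents xs \<pi> \<longleftrightarrow>
    len A \<pi> = of_nat_N A (length xs) \<and> (\<forall>i<length xs. ind A \<pi> (of_nat_N A i) (xs ! i))"

lemma represents_unique: "represents xs \<pi> \<Longrightarrow> represents xs \<rho> \<Longrightarrow> \<pi> = \<rho>"
  unfolding represents_def
  by (rule tup_ext, simp) (metis less_of_nat_N_imp_standard of_nat_N_less_iff rangeE)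

lemma represents_snoc:
  assumes "represents xs \<pi>"
  shows "\<exists>\<rho>. represents (xs @ [x]) \<rho>"
proof -
  obtain \<rho> where len: "len A \<rho> = len A \<pi> \<oplus> \<one>" and last: "ind A \<rho> (len A \<pi>) x"
    and prefix: "\<forall>i m. i \<prec> len A \<pi> \<longrightarrow> (ind A \<pi> i m \<longleftrightarrow> ind A \<rho> i m)"
    using snoc_tup by metis
  have "ind A \<rho> (of_nat_N A i) ((xs @ [x]) ! i)" if "i < length (xs @ [x])" for i
    using that assms prefix last of_nat_N_less_iff
    by (cases "i < length xs") (auto simp: represents_def nth_append less_Suc_eq)
  then show ?thesis
    using assms len unfolding represents_def by auto
qed

lemma represents_exists: "\<exists>\<pi>. represents xs \<pi>"
proof (induction xs rule: rev_induct)
  case Nil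
  then show ?case
    using empty_tup by (simp add: represents_def)
next
  case (snoc x xs)
  then show ?case
    using represents_snoc by blast
qed

definition of_list_T :: "'m list \<Rightarrow> 't" where
  "of_list_T xs = (THE \<pi>. represents xs \<pi>)"

lemma represents_of_list_T: "represents xs (of_list_T xs)"
  unfolding of_list_T_def by (metis represents_exists represents_unique theI)

lemma of_list_T_eqI: "represents xs \<pi> \<Longrightarrow> of_list_T xs = \<pi>"
  using represents_of_list_T represents_unique by blast

lemma inj_of_list_T: "inj of_list_T"
proof (rule injI)
  fix xs ys
  assume eq: "of_list_T xs = of_list_T ys"
  have xs: "represents xs (of_list_T xs)" and ys: "represents ys (of_list_T ys)"
    by (rule represents_of_list_T)+
  then have "length xs = length ys"
    using eq inj_of_nat_N by (simp add: represents_def inj_eq)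
  moreover have "xs ! i = ys ! i" if "i < length xs" for i
    using xs ys eq that \<open>length xs = length ys\<close> ind_unique unfolding represents_def by metis
  ultimately show "xs = ys"
    by (rule nth_equalityI)
qed

lemma standard_len_imp_standard:
  assumes "len A \<pi> = of_nat_N A n"
  shows "\<pi> \<in> range of_list_T"
proof -
  define xs where "xs = map (\<lambda>i. SOME m. ind A \<pi> (of_nat_N A i) m) [0..<n]"
  have "ind A \<pi> (of_nat_N A i) (xs ! i)" if "i < n" for i
    using that assms ind_exists[of "of_nat_N A i" \<pi>] of_nat_N_less_iff
    by (simp add: xs_def someI_ex)
  then have "represents xs \<pi>"
    using assms by (simp add: represents_def xs_def)
  then show ?thesis
    using of_list_T_eqI by blast
qed

lemma tup_emb_of_nat_N_of_list_T:
  assumes "trel A = Rm" and "tfun A = Fm"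
  shows "tup_emb (std_tup Rm Fm) A (of_nat_N A) of_list_T"
proof -
  have "ind A (of_list_T xs) (of_nat_N A i) m \<longleftrightarrow> i < length xs \<and> xs ! i = m" for xs i m
    using represents_of_list_T[of xs] ind_less_len ind_unique of_nat_N_less_iff
    unfolding represents_def by metis
  then show ?thesis
    using assms represents_of_list_T inj_of_nat_N inj_of_list_T
    by (simp add: tup_emb_def std_tup_def represents_def add_0_left of_nat_N_add of_nat_N_mult
        of_nat_N_less_iff)
qed

lemma tup_emb_std_tup_unique:
  assumes emb: "tup_emb (std_tup Rm Fm) A eN eT"
  shows "eN = of_nat_N A" and "eT = of_list_T"
proof -
  have N: "eN k = of_nat_N A k" for k
  proof (induction k)
    case 0
    then show ?case using emb by (simp add: tup_emb_def std_tup_def)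
  next
    case (Suc k)
    have "eN (Suc k) = eN (nplus (std_tup Rm Fm) k (none (std_tup Rm Fm)))"
      by (simp add: std_tup_def)
    also have "\<dots> = eN k \<oplus> \<one>"
      using emb by (simp add: tup_emb_def)
    finally show ?case
      using Suc.IH by simp
  qed
  then show "eN = of_nat_N A" by blast
  have "represents xs (eT xs)" for xs
  proof -
    have "eN (len (std_tup Rm Fm) xs) = len A (eT xs)"
      using emb by (simp add: tup_emb_def)
    then have "len A (eT xs) = of_nat_N A (length xs)"
      by (simp add: std_tup_def N)
    moreover have "ind A (eT xs) (of_nat_N A i) (xs ! i)" if "i < length xs" for i
    proof -
      have "ind (std_tup Rm Fm) xs i (xs ! i) \<longleftrightarrow> ind A (eT xs) (eN i) (xs ! i)"
        using emb by (simp add: tup_emb_def)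
      with that show ?thesis
        by (simp add: std_tup_def N)
    qed
    ultimately show ?thesis
      unfolding represents_def by blast
  qed
  then show "eT = of_list_T"
    using of_list_T_eqI by (metis ext)
qed

end

lemma tup_emb_std_star_iff:
  "tup_emb (std_star Rm Fm R g) A eN eT \<longleftrightarrow> tup_emb (std_tup Rm Fm) A eN eT"
  unfolding tup_emb_def std_tup_def std_star_def by simp

lemma star_emb_induced_iff:
  "star_emb (std_star Rm Fm (\<lambda>n. Rel A (eN n)) (\<lambda>n \<pi>. gfun A (eN n) (eT \<pi>))) A eN eT \<longleftrightarrow>
    tup_emb (std_tup Rm Fm) A eN eT"
  unfolding star_emb_def tup_emb_std_star_iff by (simp add: std_star_def)

theorem lemma5p5:
  fixes A :: "('r::countable,'f::countable,'m,'n,'t) tup_star"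
    and Rm :: "'r \<Rightarrow> 'm list \<Rightarrow> bool" and Fm :: "'f \<Rightarrow> 'm list \<Rightarrow> 'm"
  assumes "T_tup A"
    and "trel A = Rm" and "tfun A = Fm"
  shows "(\<exists>!e. tup_emb (std_tup Rm Fm) A (fst e) (snd e)) \<and>
    (\<forall>eN eT. tup_emb (std_tup Rm Fm) A eN eT \<longrightarrow>
       star_emb (std_star Rm Fm (\<lambda>n. Rel A (eN n)) (\<lambda>n \<pi>. gfun A (eN n) (eT \<pi>))) A eN eT \<and>
       (\<forall>a k. nless A a (eN k) \<longrightarrow> a \<in> range eN) \<and>
       (\<forall>\<pi>. len A \<pi> \<in> range eN \<longrightarrow> \<pi> \<in> range eT))"
proof -
  interpret tup_model A by unfold_locales (rule assms(1))
  have exists: "tup_emb (std_tup Rm Fm) A (of_nat_N A) of_list_T"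
    using tup_emb_of_nat_N_of_list_T assms(2,3) .
  show ?thesis
  proof (intro conjI allI impI)
    show "\<exists>!e. tup_emb (std_tup Rm Fm) A (fst e) (snd e)"
    proof (rule ex1I[of _ "(of_nat_N A, of_list_T)"])
      fix e
      assume "tup_emb (std_tup Rm Fm) A (fst e) (snd e)"
      then show "e = (of_nat_N A, of_list_T)"
        using tup_emb_std_tup_unique by (metis prod.collapse)
    qed (simp add: exists)
  next
    fix eN eT
    assume "tup_emb (std_tup Rm Fm) A eN eT"
    then show "star_emb (std_star Rm Fm (\<lambda>n. Rel A (eN n)) (\<lambda>n \<pi>. gfun A (eN n) (eT \<pi>))) A eN eT"
      unfolding star_emb_induced_iff .
  next
    fix eN eT a k
    assume "tup_emb (std_tup Rm Fm) A eN eT" and "a \<prec> eN k"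
    then show "a \<in> range eN"
      using tup_emb_std_tup_unique(1) less_of_nat_N_imp_standard by blast
  next
    fix eN eT \<pi>
    assume "tup_emb (std_tup Rm Fm) A eN eT" and "len A \<pi> \<in> range eN"
    then show "\<pi> \<in> range eT"
      using tup_emb_std_tup_unique standard_len_imp_standard by blast
  qed
qed

end
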